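(* Let $\mathcal L$ be an MV-algebra and $P$ a prime implication filter such that the (linearly ordered) quotient $\mathcal L/P$ is non-discrete. For $\mathcal F,\mathcal G\in\mathrm{PSpec}(P)$, define $\mathcal F\equiv\mathcal G$ iff $\mathcal F\sqsubseteq\!\!\to\mathcal G=\mathcal G\sqsubseteq\!\!\to\mathcal F=P$. Then $\mathcal F\mapsto\mathcal F^+$ and $(\mathcal F,\mathcal G)\mapsto\mathcal F\sqsubseteq\!\!\to\mathcal G$ induce well-defined operations on $\mathrm{PSpec}(P)/\!\equiv$. The structure $$\hat{\mathcal L}_P=\langle\mathrm{PSpec}(P)/\!\equiv,\ {}^+,\ \sqsubseteq\!\!\to\rangle$$ is a linearly ordered MV-algebra, taken in the implication–negation signature (as a Wajsberg algebra) with ${}^+$ as negation, $\sqsubseteq\!\!\to$ as implication, and top element the class of $P$. Its order is given by $[\mathcal F]\le[\mathcal G]$ iff $\mathcal F\sqsubseteq\!\!\to\mathcal G=P$.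
   Context: $\mathcal L=(L,\oplus,\lnot,0)$ is an MV-algebra. We write $1=\lnot0$, $x\otimes y=\lnot(\lnot x\oplus\lnot y)$, and $x\to y=\lnot x\oplus y$, and use the usual lattice order. An implication filter is a set $P\ni1$ closed under modus ponens. It is prime if $\mathcal L/P$ is linearly ordered, where $\mathcal L/P$ is the quotient by $x\sim_P y\iff x\to y,\ y\to x\in P$. Non-discrete means no element has an immediate successor or an immediate predecessor. A lattice filter is a nonempty upward-closed subset closed under $\wedge$. It is prime if it is proper and $a\vee b\in\mathcal F$ implies $a\in\mathcal F$ or $b\in\mathcal F$. For upward-closed $\mathcal F$ and $a\in L$, let $\mathcal F_a=\{z:z\to a\notin\mathcal F\}$, $\mathcal F^+=\mathcal F_0$, and $\mathcal K(\mathcal F)=\{z:\forall a\notin\mathcal F,\ z\to a\notin\mathcal F\}$. $\mathrm{PSpec}(P)$ is the set of prime lattice filters $\mathcal F$ with $\mathcal K(\mathcal F)=P$. For $\mathcal F\subseteq\mathcal G$ we put $\mathcal F\sqsubseteq\!\!\to\mathcal G=\bigcap_{a\in L\setminus\mathcal G}\mathcal F_a$, and in general $\mathcal F\sqsubseteq\!\!\to\mathcal G:=(\mathcal F\cap\mathcal G)\sqsubseteq\!\!\to\mathcal G$. *)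

theory Defs
  imports Main
begin

definition mv_algebra :: "('a \<Rightarrow> 'a \<Rightarrow> 'a) \<Rightarrow> ('a \<Rightarrow> 'a) \<Rightarrow> 'a \<Rightarrow> bool" where
  "mv_algebra oplus neg zero \<longleftrightarrow>
     (\<forall>x y z. oplus x (oplus y z) = oplus (oplus x y) z) \<and>
     (\<forall>x y. oplus x y = oplus y x) \<and>
     (\<forall>x. oplus x zero = x) \<and>
     (\<forall>x. neg (neg x) = x) \<and>
     (\<forall>x. oplus x (neg zero) = neg zero) \<and>
     (\<forall>x y. oplus (neg (oplus (neg x) y)) y = oplus (neg (oplus (neg y) x)) x)"

definition mv_one :: "('a \<Rightarrow> 'a) \<Rightarrow> 'a \<Rightarrow> 'a" where
  "mv_one neg zero = neg zero"

definition mv_imp :: "('a \<Rightarrow> 'a \<Rightarrow> 'a) \<Rightarrow> ('a \<Rightarrow> 'a) \<Rightarrow> 'a \<Rightarrow> 'a \<Rightarrow> 'a" where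
  "mv_imp oplus neg x y = oplus (neg x) y"

definition mv_le :: "('a \<Rightarrow> 'a \<Rightarrow> 'a) \<Rightarrow> ('a \<Rightarrow> 'a) \<Rightarrow> 'a \<Rightarrow> 'a \<Rightarrow> 'a \<Rightarrow> bool" where
  "mv_le oplus neg zero x y \<longleftrightarrow> mv_imp oplus neg x y = mv_one neg zero"

definition mv_sup :: "('a \<Rightarrow> 'a \<Rightarrow> 'a) \<Rightarrow> ('a \<Rightarrow> 'a) \<Rightarrow> 'a \<Rightarrow> 'a \<Rightarrow> 'a" where
  "mv_sup oplus neg x y = oplus (neg (oplus (neg x) y)) y"

definition mv_inf :: "('a \<Rightarrow> 'a \<Rightarrow> 'a) \<Rightarrow> ('a \<Rightarrow> 'a) \<Rightarrow> 'a \<Rightarrow> 'a \<Rightarrow> 'a" where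
  "mv_inf oplus neg x y = neg (mv_sup oplus neg (neg x) (neg y))"

definition impl_filter :: "('a \<Rightarrow> 'a \<Rightarrow> 'a) \<Rightarrow> ('a \<Rightarrow> 'a) \<Rightarrow> 'a \<Rightarrow> 'a set \<Rightarrow> bool" where
  "impl_filter oplus neg zero P \<longleftrightarrow>
     mv_one neg zero \<in> P \<and> (\<forall>x y. x \<in> P \<longrightarrow> mv_imp oplus neg x y \<in> P \<longrightarrow> y \<in> P)"

definition filt_sim :: "('a \<Rightarrow> 'a \<Rightarrow> 'a) \<Rightarrow> ('a \<Rightarrow> 'a) \<Rightarrow> 'a set \<Rightarrow> 'a \<Rightarrow> 'a \<Rightarrow> bool" where
  "filt_sim oplus neg P x y \<longleftrightarrow> mv_imp oplus neg x y \<in> P \<and> mv_imp oplus neg y x \<in> P"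

text \<open>Order of L/P on representatives: [x] \<le> [y] iff [x] \<rightarrow> [y] = [1], i.e. (x \<rightarrow> y) \<sim>_P 1\<close>
definition quot_le :: "('a \<Rightarrow> 'a \<Rightarrow> 'a) \<Rightarrow> ('a \<Rightarrow> 'a) \<Rightarrow> 'a \<Rightarrow> 'a set \<Rightarrow> 'a \<Rightarrow> 'a \<Rightarrow> bool" where
  "quot_le oplus neg zero P x y \<longleftrightarrow> filt_sim oplus neg P (mv_imp oplus neg x y) (mv_one neg zero)"

definition quot_less :: "('a \<Rightarrow> 'a \<Rightarrow> 'a) \<Rightarrow> ('a \<Rightarrow> 'a) \<Rightarrow> 'a \<Rightarrow> 'a set \<Rightarrow> 'a \<Rightarrow> 'a \<Rightarrow> bool" where
  "quot_less oplus neg zero P x y \<longleftrightarrow>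
     quot_le oplus neg zero P x y \<and> \<not> quot_le oplus neg zero P y x"

definition prime_impl_filter :: "('a \<Rightarrow> 'a \<Rightarrow> 'a) \<Rightarrow> ('a \<Rightarrow> 'a) \<Rightarrow> 'a \<Rightarrow> 'a set \<Rightarrow> bool" where
  "prime_impl_filter oplus neg zero P \<longleftrightarrow>
     impl_filter oplus neg zero P \<and>
     (\<forall>x y. quot_le oplus neg zero P x y \<or> quot_le oplus neg zero P y x)"

text \<open>L/P non-discrete: no class has an immediate successor (equivalently, no class
  has an immediate predecessor): strictly between any two classes there is a third.\<close>
definition quot_non_discrete :: "('a \<Rightarrow> 'a \<Rightarrow> 'a) \<Rightarrow> ('a \<Rightarrow> 'a) \<Rightarrow> 'a \<Rightarrow> 'a set \<Rightarrow> bool" where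
  "quot_non_discrete oplus neg zero P \<longleftrightarrow>
     (\<forall>x y. quot_less oplus neg zero P x y \<longrightarrow>
        (\<exists>z. quot_less oplus neg zero P x z \<and> quot_less oplus neg zero P z y))"

definition lattice_filter :: "('a \<Rightarrow> 'a \<Rightarrow> 'a) \<Rightarrow> ('a \<Rightarrow> 'a) \<Rightarrow> 'a \<Rightarrow> 'a set \<Rightarrow> bool" where
  "lattice_filter oplus neg zero F \<longleftrightarrow>
     F \<noteq> {} \<and>
     (\<forall>x y. x \<in> F \<longrightarrow> mv_le oplus neg zero x y \<longrightarrow> y \<in> F) \<and>
     (\<forall>x y. x \<in> F \<longrightarrow> y \<in> F \<longrightarrow> mv_inf oplus neg x y \<in> F)"

definition prime_lattice_filter :: "('a \<Rightarrow> 'a \<Rightarrow> 'a) \<Rightarrow> ('a \<Rightarrow> 'a) \<Rightarrow> 'a \<Rightarrow> 'a set \<Rightarrow> bool" where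
  "prime_lattice_filter oplus neg zero F \<longleftrightarrow>
     lattice_filter oplus neg zero F \<and> F \<noteq> UNIV \<and>
     (\<forall>a b. mv_sup oplus neg a b \<in> F \<longrightarrow> a \<in> F \<or> b \<in> F)"

definition filt_sub :: "('a \<Rightarrow> 'a \<Rightarrow> 'a) \<Rightarrow> ('a \<Rightarrow> 'a) \<Rightarrow> 'a set \<Rightarrow> 'a \<Rightarrow> 'a set" where
  "filt_sub oplus neg F a = {z. mv_imp oplus neg z a \<notin> F}"

definition filt_plus :: "('a \<Rightarrow> 'a \<Rightarrow> 'a) \<Rightarrow> ('a \<Rightarrow> 'a) \<Rightarrow> 'a \<Rightarrow> 'a set \<Rightarrow> 'a set" where
  "filt_plus oplus neg zero F = filt_sub oplus neg F zero"

definition filt_K :: "('a \<Rightarrow> 'a \<Rightarrow> 'a) \<Rightarrow> ('a \<Rightarrow> 'a) \<Rightarrow> 'a set \<Rightarrow> 'a set" where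
  "filt_K oplus neg F = {z. \<forall>a. a \<notin> F \<longrightarrow> mv_imp oplus neg z a \<notin> F}"

definition PSpec :: "('a \<Rightarrow> 'a \<Rightarrow> 'a) \<Rightarrow> ('a \<Rightarrow> 'a) \<Rightarrow> 'a \<Rightarrow> 'a set \<Rightarrow> 'a set set" where
  "PSpec oplus neg zero P =
     {F. prime_lattice_filter oplus neg zero F \<and> filt_K oplus neg F = P}"

text \<open>F \<sqsubseteq>\<rightarrow> G := (F \<inter> G) \<sqsubseteq>\<rightarrow> G = \<Inter>_{a \<in> L - G} (F \<inter> G)_a
  (for F \<subseteq> G this is the first clause of the definition).\<close>
definition sq_imp :: "('a \<Rightarrow> 'a \<Rightarrow> 'a) \<Rightarrow> ('a \<Rightarrow> 'a) \<Rightarrow> 'a set \<Rightarrow> 'a set \<Rightarrow> 'a set" where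
  "sq_imp oplus neg F G = (\<Inter>a \<in> - G. filt_sub oplus neg (F \<inter> G) a)"

definition pspec_equiv :: "('a \<Rightarrow> 'a \<Rightarrow> 'a) \<Rightarrow> ('a \<Rightarrow> 'a) \<Rightarrow> 'a \<Rightarrow> 'a set \<Rightarrow> ('a set \<times> 'a set) set" where
  "pspec_equiv oplus neg zero P =
     {(F, G). F \<in> PSpec oplus neg zero P \<and> G \<in> PSpec oplus neg zero P \<and>
              sq_imp oplus neg F G = P \<and> sq_imp oplus neg G F = P}"

definition hatL_carrier :: "('a \<Rightarrow> 'a \<Rightarrow> 'a) \<Rightarrow> ('a \<Rightarrow> 'a) \<Rightarrow> 'a \<Rightarrow> 'a set \<Rightarrow> 'a set set set" where
  "hatL_carrier oplus neg zero P = PSpec oplus neg zero P // pspec_equiv oplus neg zero P"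

definition hatL_class :: "('a \<Rightarrow> 'a \<Rightarrow> 'a) \<Rightarrow> ('a \<Rightarrow> 'a) \<Rightarrow> 'a \<Rightarrow> 'a set \<Rightarrow> 'a set \<Rightarrow> 'a set set" where
  "hatL_class oplus neg zero P F = pspec_equiv oplus neg zero P `` {F}"

definition hatL_neg :: "('a \<Rightarrow> 'a \<Rightarrow> 'a) \<Rightarrow> ('a \<Rightarrow> 'a) \<Rightarrow> 'a \<Rightarrow> 'a set \<Rightarrow> 'a set set \<Rightarrow> 'a set set" where
  "hatL_neg oplus neg zero P X =
     hatL_class oplus neg zero P (filt_plus oplus neg zero (SOME F. F \<in> X))"

definition hatL_imp :: "('a \<Rightarrow> 'a \<Rightarrow> 'a) \<Rightarrow> ('a \<Rightarrow> 'a) \<Rightarrow> 'a \<Rightarrow> 'a set \<Rightarrow> 'a set set \<Rightarrow> 'a set set \<Rightarrow> 'a set set" where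
  "hatL_imp oplus neg zero P X Y =
     hatL_class oplus neg zero P (sq_imp oplus neg (SOME F. F \<in> X) (SOME G. G \<in> Y))"

definition wajsberg_algebra :: "'b set \<Rightarrow> ('b \<Rightarrow> 'b \<Rightarrow> 'b) \<Rightarrow> ('b \<Rightarrow> 'b) \<Rightarrow> 'b \<Rightarrow> bool" where
  "wajsberg_algebra A imp neg tp \<longleftrightarrow>
     tp \<in> A \<and>
     (\<forall>x\<in>A. \<forall>y\<in>A. imp x y \<in> A) \<and>
     (\<forall>x\<in>A. neg x \<in> A) \<and>
     (\<forall>x\<in>A. imp tp x = x) \<and>
     (\<forall>x\<in>A. \<forall>y\<in>A. \<forall>z\<in>A. imp (imp x y) (imp (imp y z) (imp x z)) = tp) \<and>
     (\<forall>x\<in>A. \<forall>y\<in>A. imp (imp x y) y = imp (imp y x) x) \<and>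
     (\<forall>x\<in>A. \<forall>y\<in>A. imp (imp (neg x) (neg y)) (imp y x) = tp)"

definition wajsberg_le :: "('b \<Rightarrow> 'b \<Rightarrow> 'b) \<Rightarrow> 'b \<Rightarrow> 'b \<Rightarrow> 'b \<Rightarrow> bool" where
  "wajsberg_le imp tp x y \<longleftrightarrow> imp x y = tp"

definition linear_wajsberg_algebra :: "'b set \<Rightarrow> ('b \<Rightarrow> 'b \<Rightarrow> 'b) \<Rightarrow> ('b \<Rightarrow> 'b) \<Rightarrow> 'b \<Rightarrow> bool" where
  "linear_wajsberg_algebra A imp neg tp \<longleftrightarrow>
     wajsberg_algebra A imp neg tp \<and>
     (\<forall>x\<in>A. \<forall>y\<in>A. wajsberg_le imp tp x y \<or> wajsberg_le imp tp y x)"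

end

theory Submission
  imports Defs
begin

(*
  Write  x \<preceq> y  for  x \<rightarrow> y \<in> P.  Since P is prime this is a total preorder: the order of
  the chain L/P.  The members of PSpec(P) are exactly the "cuts" of \<preceq> (nonempty proper
  up-sets) F with K(F) = P, and for up-sets the operations of the paper become residuals
      residual U V = {t. \<forall>u\<in>U. t \<otimes> u \<in> V}:
  K(F) is the residual of F into F, F \<sqsubseteq>\<rightarrow> G that of F \<inter> G into G, and F^+ = {z. \<not>z \<notin> F}.

  The central auxiliary relation is  cut_below F G : every element outside F lies \<preceq>-below every
  element of G.  Non-discreteness makes it transitive, hence a total preorder on PSpec(P), and it
  characterises the order of the theorem:  F \<sqsubseteq>\<rightarrow> G = P  iff  cut_below F G.  So \<equiv> is the
  equivalence of this preorder; \<sqsubseteq>\<rightarrow> is antitone in its first and monotone in its second argument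
  and ^+ is antitone, which gives well-definedness.  Each Wajsberg axiom is then checked on
  representatives, where it reduces to a cut_below-inequality between residuals.
*)

lemma equiv_some_rep:
  assumes "equiv A r" and "a \<in> A"
  shows "(a, SOME b. b \<in> r `` {a}) \<in> r"
proof -
  have "a \<in> r `` {a}" using assms equiv_class_self by fast
  hence "(SOME b. b \<in> r `` {a}) \<in> r `` {a}" by (rule someI)
  thus ?thesis by blast
qed

section \<open>Arithmetic of an MV-algebra\<close>

locale mv_alg =
  fixes oplus :: "'a \<Rightarrow> 'a \<Rightarrow> 'a" (infixl "\<oplus>" 65) and neg :: "'a \<Rightarrow> 'a" and zero :: 'a
  assumes mv: "mv_algebra oplus neg zero"
begin

abbreviation one :: 'a where "one \<equiv> neg zero"

definition imp :: "'a \<Rightarrow> 'a \<Rightarrow> 'a" (infixr "\<rightarrow>" 55) where "x \<rightarrow> y = neg x \<oplus> y"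

definition otimes :: "'a \<Rightarrow> 'a \<Rightarrow> 'a" (infixl "\<otimes>" 70) where "x \<otimes> y = neg (neg x \<oplus> neg y)"

lemma add_assoc: "x \<oplus> y \<oplus> z = x \<oplus> (y \<oplus> z)" using mv unfolding mv_algebra_def by metis
lemma add_comm: "x \<oplus> y = y \<oplus> x" using mv unfolding mv_algebra_def by metis
lemma add_left_comm: "x \<oplus> (y \<oplus> z) = y \<oplus> (x \<oplus> z)" by (metis add_assoc add_comm)
lemmas add_ac = add_assoc add_comm add_left_comm

lemma add_zero [simp]: "x \<oplus> zero = x" using mv unfolding mv_algebra_def by metis
lemma zero_add [simp]: "zero \<oplus> x = x" using add_zero add_comm by metis
lemma neg_neg [simp]: "neg (neg x) = x" using mv unfolding mv_algebra_def by metis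
lemma add_one [simp]: "x \<oplus> one = one" using mv unfolding mv_algebra_def by metis
lemma one_add [simp]: "one \<oplus> x = one" using add_one add_comm by metis

text \<open>The Lukasiewicz axiom: both sides are the join of x and y.\<close>
lemma lukasiewicz: "neg (neg x \<oplus> y) \<oplus> y = neg (neg y \<oplus> x) \<oplus> x"
  using mv unfolding mv_algebra_def by metis

lemma add_neg [simp]: "x \<oplus> neg x = one" using lukasiewicz[of x one] by (simp add: add_comm)
lemma neg_add [simp]: "neg x \<oplus> x = one" by (metis add_neg add_comm)
lemma add_neg_add [simp]: "x \<oplus> (neg x \<oplus> y) = one" by (metis add_assoc add_neg one_add)

lemma one_imp [simp]: "one \<rightarrow> x = x" by (simp add: imp_def)
lemma imp_one [simp]: "x \<rightarrow> one = one" by (simp add: imp_def)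
lemma imp_self [simp]: "x \<rightarrow> x = one" by (simp add: imp_def)
lemma zero_imp [simp]: "zero \<rightarrow> x = one" by (simp add: imp_def)
lemma imp_zero: "x \<rightarrow> zero = neg x" by (simp add: imp_def)
lemma imp_exchange: "x \<rightarrow> y \<rightarrow> z = y \<rightarrow> x \<rightarrow> z" by (simp add: imp_def add_ac)
lemma imp_imp_eq_otimes_imp: "v \<rightarrow> z \<rightarrow> a = z \<otimes> v \<rightarrow> a" by (simp add: imp_def otimes_def add_ac)

lemma otimes_comm: "x \<otimes> y = y \<otimes> x" by (simp add: otimes_def add_ac)
lemma otimes_assoc: "x \<otimes> y \<otimes> z = x \<otimes> (y \<otimes> z)" by (simp add: otimes_def add_ac)
lemma otimes_left_comm: "x \<otimes> (y \<otimes> z) = y \<otimes> (x \<otimes> z)" by (simp add: otimes_def add_ac)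
lemmas otimes_ac = otimes_assoc otimes_comm otimes_left_comm
lemma otimes_one [simp]: "x \<otimes> one = x" "one \<otimes> x = x" by (simp_all add: otimes_def)
lemma otimes_zero [simp]: "x \<otimes> zero = zero" "zero \<otimes> x = zero" by (simp_all add: otimes_def)
lemma neg_otimes: "neg (q \<otimes> h) = q \<rightarrow> neg h" by (simp add: otimes_def imp_def)

text \<open>Both sides are the meet of x and y.\<close>
lemma meet_sym: "x \<otimes> (x \<rightarrow> y) = y \<otimes> (y \<rightarrow> x)"
  unfolding otimes_def imp_def using lukasiewicz[of "neg x" "neg y"] by (simp add: add_comm)

lemma imp_transitivity_one: "(x \<rightarrow> y) \<rightarrow> (y \<rightarrow> z) \<rightarrow> (x \<rightarrow> z) = one"
proof -
  have "(x \<rightarrow> y) \<rightarrow> (y \<rightarrow> z) \<rightarrow> (x \<rightarrow> z) = neg (neg x \<oplus> y) \<oplus> neg x \<oplus> (neg (neg y \<oplus> z) \<oplus> z)"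
    by (simp add: imp_def add_ac)
  also have "\<dots> = neg (neg x \<oplus> y) \<oplus> neg x \<oplus> (neg (neg z \<oplus> y) \<oplus> y)" by (simp add: lukasiewicz)
  also have "\<dots> = (neg (neg x \<oplus> y) \<oplus> (neg x \<oplus> y)) \<oplus> neg (neg z \<oplus> y)" by (simp only: add_ac)
  also have "\<dots> = one" by (simp only: neg_add one_add)
  finally show ?thesis .
qed

lemma add_monotone_one: "(x \<rightarrow> x') \<rightarrow> (x \<oplus> y \<rightarrow> x' \<oplus> y) = one"
proof -
  have "(x \<rightarrow> x') \<rightarrow> (x \<oplus> y \<rightarrow> x' \<oplus> y) = (neg (neg x \<oplus> x') \<oplus> x') \<oplus> y \<oplus> neg (x \<oplus> y)"
    by (simp add: imp_def add_ac)
  also have "\<dots> = (neg (neg x' \<oplus> x) \<oplus> x) \<oplus> y \<oplus> neg (x \<oplus> y)" by (simp add: lukasiewicz)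
  also have "\<dots> = neg (neg x' \<oplus> x) \<oplus> ((x \<oplus> y) \<oplus> neg (x \<oplus> y))" by (simp only: add_ac)
  also have "\<dots> = one" by (simp only: add_neg add_one)
  finally show ?thesis .
qed

lemma otimes_imp_left_one: "x \<otimes> y \<rightarrow> x = one" by (simp add: otimes_def imp_def add_ac)
lemma imp_otimes_one: "u \<rightarrow> t \<rightarrow> t \<otimes> u = one" by (simp add: imp_imp_eq_otimes_imp otimes_comm)
lemma imp_weaken_one: "f \<rightarrow> w \<rightarrow> f = one" by (simp add: imp_def add_ac)
lemma imp_imp_one: "x \<rightarrow> (x \<rightarrow> y) \<rightarrow> y = one" by (metis imp_exchange imp_self)

end

section \<open>The chain L/P of a prime implication filter\<close>

locale mv_prime_filter = mv_alg +
  fixes P :: "'a set"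
  assumes prime: "prime_impl_filter oplus neg zero P"
begin

definition le :: "'a \<Rightarrow> 'a \<Rightarrow> bool" (infix "\<preceq>" 50) where "x \<preceq> y \<longleftrightarrow> x \<rightarrow> y \<in> P"

lemma one_in_P [simp]: "one \<in> P"
  using prime unfolding prime_impl_filter_def impl_filter_def mv_one_def by blast
lemma modus_ponens: "x \<in> P \<Longrightarrow> x \<rightarrow> y \<in> P \<Longrightarrow> y \<in> P"
  using prime unfolding prime_impl_filter_def impl_filter_def mv_imp_def imp_def by blast
lemma mv_imp_eq [simp]: "mv_imp oplus neg x y = x \<rightarrow> y" by (simp add: mv_imp_def imp_def)
lemma quot_le_iff: "quot_le oplus neg zero P x y \<longleftrightarrow> x \<preceq> y"
  by (simp add: quot_le_def filt_sim_def mv_one_def le_def)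

lemma le_total: "x \<preceq> y \<or> y \<preceq> x" using prime quot_le_iff unfolding prime_impl_filter_def by blast
lemma le_of_imp_one: "x \<rightarrow> y = one \<Longrightarrow> x \<preceq> y" by (simp add: le_def)
lemma le_trans [trans]: "x \<preceq> y \<Longrightarrow> y \<preceq> z \<Longrightarrow> x \<preceq> z"
  using imp_transitivity_one[of x y z] modus_ponens unfolding le_def by (metis one_in_P)
lemma in_P_iff: "x \<in> P \<longleftrightarrow> one \<preceq> x" by (simp add: le_def)
lemma le_one [simp]: "x \<preceq> one" by (simp add: le_def)
lemma zero_le [simp]: "zero \<preceq> x" by (simp add: le_def)

lemma add_mono: "x \<preceq> x' \<Longrightarrow> x \<oplus> y \<preceq> x' \<oplus> y"
  using add_monotone_one[of x x' y] modus_ponens unfolding le_def by (metis one_in_P)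
lemma add_mono2: "y \<preceq> y' \<Longrightarrow> x \<oplus> y \<preceq> x \<oplus> y'" using add_mono[of y y' x] by (simp add: add_comm)
lemma neg_antimono: "x \<preceq> y \<Longrightarrow> neg y \<preceq> neg x" by (simp add: le_def imp_def add_comm)
lemma neg_le_neg_iff: "neg y \<preceq> neg x \<longleftrightarrow> x \<preceq> y"
  using neg_antimono[of "neg y" "neg x"] neg_antimono[of x y] by auto
lemma otimes_mono: "x \<preceq> x' \<Longrightarrow> x \<otimes> y \<preceq> x' \<otimes> y" unfolding otimes_def by (intro neg_antimono add_mono)
lemma otimes_mono2: "y \<preceq> y' \<Longrightarrow> x \<otimes> y \<preceq> x \<otimes> y'" using otimes_mono[of y y' x] by (simp add: otimes_comm)

lemma meet_le_left: "x \<otimes> (x \<rightarrow> y) \<preceq> x" by (simp add: le_of_imp_one otimes_imp_left_one)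
lemma meet_le_right: "x \<otimes> (x \<rightarrow> y) \<preceq> y" using meet_le_left[of y x] by (simp add: meet_sym)
lemma le_meet_left: "x \<preceq> y \<Longrightarrow> x \<preceq> x \<otimes> (x \<rightarrow> y)"
  using otimes_mono2[of one "x \<rightarrow> y" x] by (simp add: le_def)
lemma le_meet_right: "y \<preceq> x \<Longrightarrow> y \<preceq> x \<otimes> (x \<rightarrow> y)" using le_meet_left[of y x] by (simp add: meet_sym)

lemma le_P_otimes: "p \<in> P \<Longrightarrow> u \<preceq> p \<otimes> u" using otimes_mono[of one p u] by (simp add: in_P_iff)
lemma le_imp_otimes: "u \<preceq> t \<rightarrow> t \<otimes> u" by (simp add: le_of_imp_one imp_otimes_one)
lemma le_imp_weaken: "f \<preceq> w \<rightarrow> f" by (simp add: le_of_imp_one imp_weaken_one)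

text \<open>Cancellation below the top: if u < v and s \<oplus> v \<preceq> s \<oplus> u, then s \<oplus> u is (equivalent to) 1.
  This is where linearity of L/P is used to compare s \<oplus> u with the "difference" of v and u.\<close>
lemma add_cancel:
  assumes nvu: "\<not> v \<preceq> u" and uv: "u \<preceq> v" and h: "s \<oplus> v \<preceq> s \<oplus> u"
  shows "s \<oplus> u \<in> P"
proof -
  define w where "w = neg (v \<rightarrow> u)"
  define t where "t = s \<oplus> u"
  have "u \<oplus> w = neg (neg u \<oplus> v) \<oplus> v"
    unfolding w_def imp_def using lukasiewicz[of v u] by (simp add: add_comm)
  moreover have "neg (neg u \<oplus> v) \<preceq> zero" using uv neg_antimono[of one "neg u \<oplus> v"]
    unfolding le_def imp_def by simp
  ultimately have "u \<oplus> w \<preceq> v" using add_mono[of "neg (neg u \<oplus> v)" zero v] by simp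
  hence "t \<oplus> w \<preceq> s \<oplus> v" unfolding t_def using add_mono2 by (metis add_assoc)
  hence "t \<oplus> w \<preceq> t" using h t_def le_trans by blast
  hence "neg t \<otimes> (neg t \<rightarrow> w) \<preceq> zero"
    using otimes_mono2[of "t \<oplus> w" t "neg t"] by (simp add: otimes_def imp_def)
  show ?thesis
  proof (cases "neg t \<preceq> w")
    case True
    hence "neg t \<preceq> zero" using le_meet_left \<open>neg t \<otimes> (neg t \<rightarrow> w) \<preceq> zero\<close> le_trans by blast
    thus ?thesis unfolding t_def le_def imp_def by simp
  next
    case False
    hence "w \<preceq> zero" using le_total le_meet_right \<open>neg t \<otimes> (neg t \<rightarrow> w) \<preceq> zero\<close> le_trans by blast
    hence "v \<preceq> u" unfolding w_def le_def imp_def by simp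
    thus ?thesis using nvu by blast
  qed
qed

lemma otimes_cancel:
  assumes "\<not> t' \<preceq> t" and "t' \<otimes> u \<preceq> t \<otimes> u"
  shows "t' \<otimes> u \<preceq> zero"
proof -
  have "neg u \<oplus> neg t \<preceq> neg u \<oplus> neg t'"
    using neg_antimono[OF assms(2)] by (simp add: otimes_def add_comm)
  hence "neg u \<oplus> neg t' \<in> P"
    using add_cancel assms(1) le_total neg_le_neg_iff neg_antimono by blast
  thus ?thesis by (simp add: le_def imp_def otimes_def add_comm)
qed

lemma imp_strict: assumes "w \<notin> P" "f \<notin> P" shows "\<not> w \<rightarrow> f \<preceq> f"
proof
  assume "w \<rightarrow> f \<preceq> f"
  hence "f \<oplus> neg w \<preceq> f \<oplus> zero" by (simp add: imp_def add_comm)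
  moreover have "\<not> neg w \<preceq> zero" using assms(1) by (simp add: le_def imp_def)
  ultimately have "f \<oplus> zero \<in> P" using add_cancel[of "neg w" zero f] by simp
  thus False using assms(2) by simp
qed

end

section \<open>Cuts, residuals and the prime spectrum\<close>

context mv_prime_filter
begin

abbreviation PS :: "'a set set" where "PS \<equiv> PSpec oplus neg zero P"
abbreviation sqimp :: "'a set \<Rightarrow> 'a set \<Rightarrow> 'a set" where "sqimp F G \<equiv> sq_imp oplus neg F G"
abbreviation fplus :: "'a set \<Rightarrow> 'a set" where "fplus F \<equiv> filt_plus oplus neg zero F"

definition upset :: "'a set \<Rightarrow> bool" where "upset U \<longleftrightarrow> (\<forall>x y. x \<in> U \<longrightarrow> x \<preceq> y \<longrightarrow> y \<in> U)"

definition cut :: "'a set \<Rightarrow> bool" where "cut U \<longleftrightarrow> upset U \<and> U \<noteq> {} \<and> U \<noteq> UNIV"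

definition residual :: "'a set \<Rightarrow> 'a set \<Rightarrow> 'a set" where "residual U V = {t. \<forall>u\<in>U. t \<otimes> u \<in> V}"

text \<open>Everything outside U lies below everything in V; this will be the order of the quotient.\<close>
definition cut_below :: "'a set \<Rightarrow> 'a set \<Rightarrow> bool" where
  "cut_below U V \<longleftrightarrow> (\<forall>x\<in>V. \<forall>y. y \<notin> U \<longrightarrow> y \<preceq> x)"

lemma upsetD: "upset U \<Longrightarrow> x \<in> U \<Longrightarrow> x \<preceq> y \<Longrightarrow> y \<in> U" unfolding upset_def by blast
lemma upset_P: "upset P" unfolding upset_def le_def using modus_ponens by blast
lemma upset_Int: "upset U \<Longrightarrow> upset V \<Longrightarrow> upset (U \<inter> V)" unfolding upset_def by blast
lemma upset_residual: "upset V \<Longrightarrow> upset (residual U V)"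
  unfolding upset_def residual_def using otimes_mono by blast
lemma upsets_comparable: "upset U \<Longrightarrow> upset V \<Longrightarrow> U \<subseteq> V \<or> V \<subseteq> U" using upsetD le_total by blast

lemma cut_upset: "cut U \<Longrightarrow> upset U" unfolding cut_def by blast
lemma cut_one: "cut U \<Longrightarrow> one \<in> U" unfolding cut_def using upsetD le_one by blast
lemma cut_zero: "cut U \<Longrightarrow> zero \<notin> U" unfolding cut_def using upsetD zero_le by blast
lemma cut_P_subset: "cut U \<Longrightarrow> P \<subseteq> U" using cut_one upsetD in_P_iff unfolding cut_def by blast
lemma cut_outside_le: "cut U \<Longrightarrow> y \<notin> U \<Longrightarrow> x \<in> U \<Longrightarrow> y \<preceq> x"
  unfolding cut_def using upsetD le_total by blast

lemma residual_eq:
  assumes W: "upset W" and V: "upset V"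
  shows "{z. \<forall>a. a \<notin> V \<longrightarrow> z \<rightarrow> a \<notin> W} = residual W V"
proof (intro set_eqI iffI)
  fix z assume z: "z \<in> {z. \<forall>a. a \<notin> V \<longrightarrow> z \<rightarrow> a \<notin> W}"
  show "z \<in> residual W V" unfolding residual_def
    using z upsetD[OF W _ le_imp_otimes] by blast
next
  fix z assume "z \<in> residual W V"
  thus "z \<in> {z. \<forall>a. a \<notin> V \<longrightarrow> z \<rightarrow> a \<notin> W}"
    unfolding residual_def using upsetD[OF V _ meet_le_right] by blast
qed

lemma filt_K_eq: "upset F \<Longrightarrow> filt_K oplus neg F = residual F F"
  unfolding filt_K_def mv_imp_eq using residual_eq[of F F] by simp

lemma sq_imp_eq:
  assumes "upset F" "upset G"
  shows "sqimp F G = residual (F \<inter> G) G"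
proof -
  have "sqimp F G = {z. \<forall>a. a \<notin> G \<longrightarrow> z \<rightarrow> a \<notin> F \<inter> G}"
    unfolding sq_imp_def filt_sub_def mv_imp_eq by blast
  thus ?thesis using residual_eq[OF upset_Int[OF assms] assms(2)] by simp
qed

lemma filt_plus_eq: "fplus F = {z. neg z \<notin> F}"
  unfolding filt_plus_def filt_sub_def mv_imp_eq by (simp add: imp_zero)

lemma cut_prime_lattice_filter:
  assumes F: "cut F"
  shows "prime_lattice_filter oplus neg zero F"
proof -
  have up: "upset F" using F cut_upset by blast
  have "lattice_filter oplus neg zero F" unfolding lattice_filter_def
  proof (intro conjI allI impI)
    show "F \<noteq> {}" using F cut_def by blast
  next
    fix x y assume "x \<in> F" "mv_le oplus neg zero x y"
    thus "y \<in> F" using up upsetD unfolding mv_le_def mv_one_def by (auto intro: le_of_imp_one)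
  next
    fix x y assume xy: "x \<in> F" "y \<in> F"
    have "mv_inf oplus neg x y = y \<otimes> (y \<rightarrow> x)"
      unfolding mv_inf_def mv_sup_def otimes_def imp_def by (simp add: add_comm)
    thus "mv_inf oplus neg x y \<in> F"
      using le_total[of x y] le_meet_left[of y x] le_meet_right[of x y] xy up upsetD by metis
  qed
  moreover have "mv_sup oplus neg a b \<in> F \<Longrightarrow> a \<in> F \<or> b \<in> F" for a b
  proof -
    have join_le: "neg (x \<rightarrow> y) \<oplus> y \<preceq> y" if "x \<preceq> y" for x y
      using that neg_antimono[of one "x \<rightarrow> y"] add_mono[of "neg (x \<rightarrow> y)" zero y]
      unfolding le_def by simp
    assume s: "mv_sup oplus neg a b \<in> F"
    have "mv_sup oplus neg a b = neg (a \<rightarrow> b) \<oplus> b" "mv_sup oplus neg a b = neg (b \<rightarrow> a) \<oplus> a"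
      unfolding mv_sup_def imp_def by (rule refl, rule lukasiewicz)
    thus "a \<in> F \<or> b \<in> F" using le_total[of a b] join_le s up upsetD by metis
  qed
  ultimately show ?thesis using F unfolding prime_lattice_filter_def cut_def by blast
qed

text \<open>Conversely a prime lattice filter F with K(F) = P is an up-set: x \<preceq> y means x \<rightarrow> y \<in> K(F),
  and then y \<notin> F would force (x \<rightarrow> y) \<rightarrow> y \<notin> F although it lies above x.\<close>
lemma PSpec_upset:
  assumes F: "F \<in> PS"
  shows "upset F"
  unfolding upset_def
proof (intro allI impI, rule ccontr)
  have lf: "lattice_filter oplus neg zero F" and K: "filt_K oplus neg F = P"
    using F unfolding PSpec_def prime_lattice_filter_def by auto
  fix x y assume "x \<in> F" "x \<preceq> y" "y \<notin> F"
  hence "(x \<rightarrow> y) \<rightarrow> y \<notin> F" using K le_def unfolding filt_K_def by auto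
  moreover have "mv_le oplus neg zero x ((x \<rightarrow> y) \<rightarrow> y)"
    unfolding mv_le_def mv_one_def by (simp add: imp_imp_one)
  ultimately show False using lf \<open>x \<in> F\<close> unfolding lattice_filter_def by blast
qed

lemma PSpec_iff: "F \<in> PS \<longleftrightarrow> cut F \<and> residual F F = P"
proof
  assume F: "F \<in> PS"
  then show "cut F \<and> residual F F = P"
    using PSpec_upset[OF F] filt_K_eq[OF PSpec_upset[OF F]]
    unfolding PSpec_def prime_lattice_filter_def lattice_filter_def cut_def by auto
next
  assume "cut F \<and> residual F F = P"
  then show "F \<in> PS" unfolding PSpec_def
    using cut_prime_lattice_filter filt_K_eq cut_upset by auto
qed

lemma PSpec_cut: "F \<in> PS \<Longrightarrow> cut F" using PSpec_iff by blast
lemma PSpec_residual: "F \<in> PS \<Longrightarrow> residual F F = P" using PSpec_iff by blast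

lemma PSpec_escape: "F \<in> PS \<Longrightarrow> t \<notin> P \<Longrightarrow> \<exists>u\<in>F. t \<otimes> u \<notin> F"
  using PSpec_residual unfolding residual_def by blast

lemma P_subset_residual: "upset V \<Longrightarrow> U \<subseteq> V \<Longrightarrow> upset U \<Longrightarrow> P \<subseteq> residual U V"
  unfolding residual_def using le_P_otimes upsetD by blast

lemma fplus_PSpec:
  assumes F: "F \<in> PS"
  shows "fplus F \<in> PS"
proof -
  let ?Fp = "{z. neg z \<notin> F}"
  have cF: "cut F" using PSpec_cut F .
  have up: "upset ?Fp" unfolding upset_def using neg_antimono upsetD cF cut_upset by blast
  have "one \<in> ?Fp" "zero \<notin> ?Fp" using cut_zero[OF cF] cut_one[OF cF] by simp_all
  hence cp: "cut ?Fp" using up unfolding cut_def by blast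
  have "residual ?Fp ?Fp \<subseteq> P"
  proof
    fix t assume t: "t \<in> residual ?Fp ?Fp"
    show "t \<in> P"
    proof (rule ccontr)
      assume "t \<notin> P"
      then obtain u where u: "u \<in> F" "t \<otimes> u \<notin> F" using PSpec_escape F by blast
      hence "t \<otimes> neg (t \<otimes> u) \<in> ?Fp" using t unfolding residual_def by simp
      hence "t \<rightarrow> t \<otimes> u \<notin> F" by (simp add: otimes_def imp_def)
      thus False using upsetD[OF cut_upset[OF cF] u(1) le_imp_otimes] by blast
    qed
  qed
  hence "residual ?Fp ?Fp = P" using P_subset_residual[OF up _ up] by blast
  thus ?thesis unfolding filt_plus_eq using PSpec_iff cp by blast
qed

lemma cut_below_of_subset: "cut U \<Longrightarrow> V \<subseteq> U \<Longrightarrow> cut_below U V"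
  unfolding cut_below_def using cut_outside_le by blast
lemma cut_below_refl: "cut U \<Longrightarrow> cut_below U U" using cut_below_of_subset by blast
lemma cut_below_total: "cut U \<Longrightarrow> cut V \<Longrightarrow> cut_below U V \<or> cut_below V U"
  using upsets_comparable cut_below_of_subset cut_upset by metis
lemma cut_below_P: "cut_below U P" unfolding cut_below_def using in_P_iff le_one le_trans by blast

lemma cut_below_fplus: "cut_below F G \<Longrightarrow> cut_below (fplus G) (fplus F)"
  unfolding cut_below_def filt_plus_eq using neg_le_neg_iff by blast

end

section \<open>The implication \<sqsubseteq>\<rightarrow> on PSpec(P)\<close>

context mv_prime_filter
begin

lemma sq_imp_of_subset: "F \<in> PS \<Longrightarrow> G \<in> PS \<Longrightarrow> F \<subseteq> G \<Longrightarrow> sqimp F G = residual F G"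
  using sq_imp_eq[OF PSpec_upset PSpec_upset, of F G] by (simp add: Int_absorb2)
lemma sq_imp_of_supset: "F \<in> PS \<Longrightarrow> G \<in> PS \<Longrightarrow> G \<subseteq> F \<Longrightarrow> sqimp F G = P"
  using sq_imp_eq[OF PSpec_upset PSpec_upset, of F G] PSpec_residual[of G] by (simp add: Int_absorb1)

lemma sq_imp_mono:
  assumes F: "F \<in> PS" and G: "G \<in> PS" and G': "G' \<in> PS" and GG': "cut_below G G'"
  shows "cut_below (sqimp F G) (sqimp F G')"
  unfolding sq_imp_eq[OF PSpec_upset[OF F] PSpec_upset[OF G]]
    sq_imp_eq[OF PSpec_upset[OF F] PSpec_upset[OF G']] cut_below_def
proof (intro ballI allI impI, rule ccontr)
  fix x y assume x: "x \<in> residual (F \<inter> G') G'" and y: "y \<notin> residual (F \<inter> G) G" and n: "\<not> y \<preceq> x"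
  obtain f where f: "f \<in> F" "f \<in> G" "y \<otimes> f \<notin> G" using y unfolding residual_def by blast
  show False
  proof (cases "f \<in> G'")
    case True
    hence xf: "x \<otimes> f \<in> G'" using x f unfolding residual_def by blast
    have "y \<otimes> f \<preceq> x \<otimes> f" using GG' xf f unfolding cut_below_def by blast
    hence "y \<otimes> f \<preceq> zero" using otimes_cancel n by blast
    moreover have "x \<otimes> f \<preceq> y \<otimes> f" using otimes_mono n le_total by blast
    ultimately have "zero \<in> G'" using upsetD[OF PSpec_upset[OF G'] xf] le_trans by blast
    thus False using cut_zero PSpec_cut G' by blast
  next
    case False
    hence "F \<inter> G' = G'" using upsets_comparable[OF PSpec_upset[OF F] PSpec_upset[OF G']] f by blast
    hence "x \<in> P" using x PSpec_residual[OF G'] by simp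
    thus False using n in_P_iff le_one le_trans by blast
  qed
qed

lemma sq_imp_antimono:
  assumes F: "F \<in> PS" and F': "F' \<in> PS" and G: "G \<in> PS" and F'F: "cut_below F' F"
  shows "cut_below (sqimp F G) (sqimp F' G)"
  unfolding sq_imp_eq[OF PSpec_upset[OF F] PSpec_upset[OF G]]
    sq_imp_eq[OF PSpec_upset[OF F'] PSpec_upset[OF G]] cut_below_def
proof (intro ballI allI impI, rule ccontr)
  fix x y assume x: "x \<in> residual (F' \<inter> G) G" and y: "y \<notin> residual (F \<inter> G) G" and n: "\<not> y \<preceq> x"
  have upG: "upset G" using PSpec_upset G .
  obtain f where f: "f \<in> F" "f \<in> G" "y \<otimes> f \<notin> G" using y unfolding residual_def by blast
  have xy: "x \<preceq> y" using n le_total by blast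
  show False
  proof (cases "f \<in> F'")
    case True
    hence "x \<otimes> f \<in> G" using x f unfolding residual_def by blast
    thus False using otimes_mono[OF xy] f upsetD[OF upG] by blast
  next
    case False
    hence fP: "f \<notin> P" using cut_P_subset PSpec_cut F' by blast
    define w where "w = y \<rightarrow> x"
    have wP: "w \<notin> P" using n unfolding w_def le_def .
    text \<open>w \<rightarrow> f lies strictly above f, hence in F'; multiplying it by x stays in G.\<close>
    have "w \<rightarrow> f \<in> F'" using F'F f imp_strict[OF wP fP] unfolding cut_below_def by blast
    moreover have "w \<rightarrow> f \<in> G" using upsetD[OF upG f(2) le_imp_weaken] .
    ultimately have xf: "x \<otimes> (w \<rightarrow> f) \<in> G" using x unfolding residual_def by blast
    have "x \<otimes> (w \<rightarrow> f) \<preceq> y \<otimes> w \<otimes> (w \<rightarrow> f)"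
      using otimes_mono le_meet_right[OF xy] w_def by blast
    also have "y \<otimes> w \<otimes> (w \<rightarrow> f) \<preceq> y \<otimes> f"
      using otimes_mono2 meet_le_right by (metis otimes_assoc)
    finally show False using xf f upsetD[OF upG] by blast
  qed
qed

end

section \<open>Consequences of non-discreteness\<close>

locale mv_nondiscrete = mv_prime_filter +
  assumes proper: "P \<noteq> UNIV"
    and nondiscrete: "quot_non_discrete oplus neg zero P"
begin

lemma dense_between: "\<not> y \<preceq> x \<Longrightarrow> \<exists>m. \<not> m \<preceq> x \<and> \<not> y \<preceq> m"
  using nondiscrete le_total unfolding quot_non_discrete_def quot_less_def quot_le_iff by metis

lemma cut_below_trans:
  assumes "cut_below U V" "cut_below V W"
  shows "cut_below U W"
  unfolding cut_below_def
proof (intro ballI allI impI, rule ccontr)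
  fix x y assume "x \<in> W" "y \<notin> U" "\<not> y \<preceq> x"
  then obtain m where "\<not> m \<preceq> x" "\<not> y \<preceq> m" using dense_between by blast
  thus False using assms \<open>x \<in> W\<close> \<open>y \<notin> U\<close> unfolding cut_below_def by (cases "m \<in> V") blast+
qed

lemma P_PSpec: "P \<in> PS"
proof -
  have cut: "cut P" unfolding cut_def using upset_P proper one_in_P by blast
  have "residual P P \<subseteq> P" unfolding residual_def using one_in_P otimes_one(1) by fastforce
  thus ?thesis using PSpec_iff cut P_subset_residual upset_P by blast
qed

text \<open>No element of PSpec(P) other than P lies above P: a gap above P would contain an element.\<close>
lemma cut_below_P_iff: "H \<in> PS \<Longrightarrow> cut_below P H \<longleftrightarrow> H = P"
proof
  assume H: "H \<in> PS" and PH: "cut_below P H"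
  have "h \<in> P" if h: "h \<in> H" for h
  proof (rule ccontr)
    assume "h \<notin> P"
    then obtain m where "\<not> m \<preceq> h" "\<not> one \<preceq> m" using dense_between in_P_iff by blast
    thus False using PH h in_P_iff unfolding cut_below_def by blast
  qed
  thus "H = P" using cut_P_subset PSpec_cut H by blast
next
  show "H = P \<Longrightarrow> cut_below P H" using cut_below_refl PSpec_cut P_PSpec by blast
qed

lemma residual_eq_P_iff:
  assumes F: "F \<in> PS" and G: "G \<in> PS" and FG: "F \<subseteq> G"
  shows "residual F G = P \<longleftrightarrow> cut_below F G"
proof
  assume FGP: "residual F G = P"
  show "cut_below F G" unfolding cut_below_def
  proof (intro ballI allI impI, rule ccontr)
    fix x y assume x: "x \<in> G" and y: "y \<notin> F" and n: "\<not> y \<preceq> x"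
    have "(y \<rightarrow> x) \<otimes> u \<in> G" if u: "u \<in> F" for u
    proof -
      have "x \<preceq> (y \<rightarrow> x) \<otimes> y" using le_meet_right n le_total by (metis otimes_comm)
      also have "\<dots> \<preceq> (y \<rightarrow> x) \<otimes> u" using otimes_mono2 cut_outside_le PSpec_cut F y u by blast
      finally show ?thesis using x PSpec_upset G upsetD by blast
    qed
    hence "y \<rightarrow> x \<in> P" using FGP unfolding residual_def by blast
    thus False using n le_def by simp
  qed
next
  assume FG_below: "cut_below F G"
  have "residual F G \<subseteq> P"
  proof
    fix t assume t: "t \<in> residual F G"
    show "t \<in> P"
    proof (rule ccontr)
      assume "t \<notin> P"
      then obtain t' where t': "\<not> t' \<preceq> t" "\<not> one \<preceq> t'" using dense_between in_P_iff by blast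
      then obtain u where u: "u \<in> F" "t' \<otimes> u \<notin> F" using PSpec_escape F in_P_iff by blast
      have tu: "t \<otimes> u \<in> G" using t u unfolding residual_def by blast
      have "t' \<otimes> u \<preceq> t \<otimes> u" using FG_below tu u unfolding cut_below_def by blast
      hence "t' \<otimes> u \<preceq> zero" using otimes_cancel t' by blast
      moreover have "t' \<otimes> u \<in> G" using tu otimes_mono t' le_total PSpec_upset G upsetD by blast
      ultimately have "zero \<in> G" using PSpec_upset G upsetD by blast
      thus False using cut_zero PSpec_cut G by blast
    qed
  qed
  thus "residual F G = P" using P_subset_residual PSpec_upset F G FG by blast
qed

lemma sq_imp_eq_P_iff:
  assumes F: "F \<in> PS" and G: "G \<in> PS"
  shows "sqimp F G = P \<longleftrightarrow> cut_below F G"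
proof (cases "G \<subseteq> F")
  case True
  thus ?thesis using sq_imp_of_supset cut_below_of_subset PSpec_cut F G by blast
next
  case False
  hence "F \<subseteq> G" using upsets_comparable PSpec_upset F G by blast
  thus ?thesis using sq_imp_of_subset[OF F G] residual_eq_P_iff[OF F G] by simp
qed

lemma imp_mem_residual:
  assumes F: "cut F" and G: "upset G" and FG: "F \<subseteq> G" and s: "s \<notin> F" and v: "v \<in> G"
  shows "s \<rightarrow> v \<in> residual F G"
  unfolding residual_def
proof (intro CollectI ballI)
  fix u assume u: "u \<in> F"
  show "(s \<rightarrow> v) \<otimes> u \<in> G"
  proof (cases "s \<preceq> v")
    case True
    hence "u \<preceq> (s \<rightarrow> v) \<otimes> u" using le_P_otimes le_def by blast
    thus ?thesis using u FG G upsetD by blast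
  next
    case False
    hence "v \<preceq> s \<otimes> (s \<rightarrow> v)" using le_total le_meet_right by blast
    also have "\<dots> \<preceq> (s \<rightarrow> v) \<otimes> u" using otimes_mono cut_outside_le[OF F s u] by (metis otimes_comm)
    finally show ?thesis using v G upsetD by blast
  qed
qed

text \<open>To see that K(residual F G) = P, take t \<notin> P
  and t < t1 < 1; witnesses u1 \<in> F, v \<in> G for t1 \<notin> P and t1 \<rightarrow> t \<notin> P produce the element
  (t1 \<otimes> u1) \<rightarrow> v of the residual that t pushes out of it.\<close>
lemma residual_PSpec:
  assumes F: "F \<in> PS" and G: "G \<in> PS" and FG: "F \<subseteq> G"
  shows "residual F G \<in> PS"
proof -
  let ?H = "residual F G"
  have cF: "cut F" and cG: "cut G" using PSpec_cut F G by auto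
  have upH: "upset ?H" using upset_residual cG cut_upset by blast
  have PH: "P \<subseteq> ?H" using P_subset_residual cF cG FG cut_upset by blast
  obtain u where "u \<in> F" using cF cut_def by blast
  hence "zero \<notin> ?H" using cut_zero[OF cG] unfolding residual_def by auto
  hence cH: "cut ?H" using upH PH one_in_P unfolding cut_def by blast
  have "residual ?H ?H \<subseteq> P"
  proof
    fix t assume t: "t \<in> residual ?H ?H"
    show "t \<in> P"
    proof (rule ccontr)
      assume "t \<notin> P"
      then obtain t1 where t1: "\<not> t1 \<preceq> t" "\<not> one \<preceq> t1" using dense_between in_P_iff by blast
      then obtain u1 where u1: "u1 \<in> F" "t1 \<otimes> u1 \<notin> F" using PSpec_escape F in_P_iff by blast
      define w where "w = t1 \<rightarrow> t"
      have "w \<notin> P" using t1 unfolding w_def le_def by blast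
      then obtain v where v: "v \<in> G" "w \<otimes> v \<notin> G" using PSpec_escape G by blast
      define s where "s = t1 \<otimes> u1"
      have "s \<rightarrow> v \<in> ?H" using imp_mem_residual cF cut_upset[OF cG] FG u1(2) v(1) s_def by blast
      hence in_G: "t \<otimes> (s \<rightarrow> v) \<otimes> u1 \<in> G" using t u1 unfolding residual_def by blast
      have "t \<otimes> (s \<rightarrow> v) \<otimes> u1 \<preceq> t1 \<otimes> w \<otimes> (s \<rightarrow> v) \<otimes> u1"
        using otimes_mono le_meet_right t1 le_total w_def by metis
      also have "\<dots> = w \<otimes> (s \<otimes> (s \<rightarrow> v))" by (simp add: s_def otimes_ac)
      also have "\<dots> \<preceq> w \<otimes> v" using otimes_mono2 meet_le_right by blast
      finally show False using in_G v cut_upset[OF cG] upsetD by blast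
    qed
  qed
  hence "residual ?H ?H = P" using P_subset_residual[OF upH _ upH] by blast
  thus ?thesis using PSpec_iff cH by blast
qed

lemma sq_imp_PSpec:
  assumes F: "F \<in> PS" and G: "G \<in> PS"
  shows "sqimp F G \<in> PS"
  using upsets_comparable[OF PSpec_upset[OF F] PSpec_upset[OF G]]
    sq_imp_of_supset[OF F G] sq_imp_of_subset[OF F G] residual_PSpec[OF F G] P_PSpec by auto

lemma P_sq_imp:
  assumes G: "G \<in> PS"
  shows "sqimp P G = G"
proof -
  have "sqimp P G = residual P G" using sq_imp_of_subset[OF P_PSpec G] cut_P_subset PSpec_cut G by blast
  also have "\<dots> = G"
  proof
    show "residual P G \<subseteq> G" unfolding residual_def using one_in_P by fastforce
    show "G \<subseteq> residual P G" unfolding residual_def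
    proof (intro subsetI CollectI ballI)
      fix t p assume "t \<in> G" "p \<in> P"
      thus "t \<otimes> p \<in> G" using le_P_otimes upsetD[OF PSpec_upset[OF G]] by (metis otimes_comm)
    qed
  qed
  finally show ?thesis .
qed

end

section \<open>The equivalence \<equiv> and the Wajsberg laws on representatives\<close>

context mv_nondiscrete
begin

abbreviation equivP :: "('a set \<times> 'a set) set" where "equivP \<equiv> pspec_equiv oplus neg zero P"

lemma pspec_equiv_iff: "(F, G) \<in> equivP \<longleftrightarrow> F \<in> PS \<and> G \<in> PS \<and> cut_below F G \<and> cut_below G F"
  unfolding pspec_equiv_def using sq_imp_eq_P_iff by blast

lemma pspec_equiv_equiv: "equiv PS equivP"
proof (rule equivI)
  show "refl_on PS equivP" unfolding refl_on_def using pspec_equiv_iff cut_below_refl PSpec_cut by blast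
  show "sym equivP" unfolding sym_def using pspec_equiv_iff by blast
  show "trans equivP" unfolding trans_def using pspec_equiv_iff cut_below_trans by meson
  show "equivP \<subseteq> PS \<times> PS" unfolding pspec_equiv_def by blast
qed

lemma sq_imp_respects:
  assumes "(F, F') \<in> equivP" "(G, G') \<in> equivP"
  shows "(sqimp F G, sqimp F' G') \<in> equivP"
proof -
  have h: "F \<in> PS" "F' \<in> PS" "G \<in> PS" "G' \<in> PS" "cut_below F F'" "cut_below F' F"
    "cut_below G G'" "cut_below G' G" using assms pspec_equiv_iff by auto
  have "cut_below (sqimp F G) (sqimp F' G')"
    using cut_below_trans[OF sq_imp_antimono[OF h(1,2,3,6)] sq_imp_mono[OF h(2,3,4,7)]] .
  moreover have "cut_below (sqimp F' G') (sqimp F G)"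
    using cut_below_trans[OF sq_imp_antimono[OF h(2,1,4,5)] sq_imp_mono[OF h(1,4,3,8)]] .
  ultimately show ?thesis using pspec_equiv_iff sq_imp_PSpec h by blast
qed

lemma fplus_respects:
  assumes "(F, F') \<in> equivP"
  shows "(fplus F, fplus F') \<in> equivP"
  using assms pspec_equiv_iff fplus_PSpec cut_below_fplus by blast

lemma residual_transitivity:
  assumes G: "G \<in> PS" and K: "K \<in> PS" and GK: "G \<subseteq> K"
  shows "cut_below (residual F G) (residual (residual G K) (residual F K))"
  unfolding cut_below_def
proof (intro ballI allI impI, rule ccontr)
  fix d q assume d: "d \<in> residual (residual G K) (residual F K)"
    and q: "q \<notin> residual F G" and n: "\<not> q \<preceq> d"
  obtain x where x: "x \<in> F" "q \<otimes> x \<notin> G" using q unfolding residual_def by blast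
  define w where "w = q \<rightarrow> d"
  have "w \<notin> P" using n unfolding w_def le_def .
  then obtain b where b: "b \<in> residual G K" "w \<otimes> b \<notin> residual G K"
    using PSpec_escape residual_PSpec[OF G K GK] by blast
  then obtain y where y: "y \<in> G" "w \<otimes> b \<otimes> y \<notin> K" unfolding residual_def by blast
  have "d \<otimes> b \<in> residual F K" using d b unfolding residual_def by blast
  hence dbx: "d \<otimes> b \<otimes> x \<in> K" using x unfolding residual_def by blast
  have "d \<preceq> q \<otimes> w" using le_meet_right n le_total w_def by blast
  hence "d \<otimes> b \<otimes> x \<preceq> q \<otimes> w \<otimes> b \<otimes> x" by (intro otimes_mono)
  also have "\<dots> = w \<otimes> b \<otimes> (q \<otimes> x)" by (simp add: otimes_ac)
  also have "\<dots> \<preceq> w \<otimes> b \<otimes> y" using otimes_mono2 cut_outside_le PSpec_cut G x y by blast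
  finally show False using dbx y upsetD PSpec_upset K by blast
qed

lemma sq_imp_transitivity:
  assumes F: "F \<in> PS" and G: "G \<in> PS" and K: "K \<in> PS"
  shows "cut_below (sqimp F G) (sqimp (sqimp G K) (sqimp F K))"
proof (cases "cut_below F G")
  case True
  have "sqimp F G = P" using True sq_imp_eq_P_iff F G by blast
  moreover have "sqimp (sqimp G K) (sqimp F K) = P"
    using sq_imp_antimono[OF G F K True] sq_imp_eq_P_iff sq_imp_PSpec F G K by blast
  ultimately show ?thesis using cut_below_refl PSpec_cut P_PSpec by simp
next
  case nFG: False
  hence FG: "F \<subseteq> G" using upsets_comparable PSpec_upset cut_below_of_subset PSpec_cut F G by metis
  show ?thesis
  proof (cases "cut_below G K")
    case True
    hence "sqimp G K = P" using sq_imp_eq_P_iff G K by blast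
    hence "sqimp (sqimp G K) (sqimp F K) = sqimp F K" using P_sq_imp sq_imp_PSpec F K by simp
    thus ?thesis using sq_imp_mono[OF F G K True] by simp
  next
    case False
    hence GK: "G \<subseteq> K" using upsets_comparable PSpec_upset cut_below_of_subset PSpec_cut G K by metis
    have "residual G K \<subseteq> residual F K" unfolding residual_def using FG by blast
    hence "sqimp (sqimp G K) (sqimp F K) = residual (residual G K) (residual F K)"
      using sq_imp_of_subset residual_PSpec F G K FG GK by (metis subset_trans)
    moreover have "sqimp F G = residual F G" using sq_imp_of_subset F G FG by blast
    ultimately show ?thesis using residual_transitivity[OF G K GK] by simp
  qed
qed

text \<open>The two halves of  (G \<sqsubseteq>\<rightarrow> F) \<sqsubseteq>\<rightarrow> F \<equiv> G  for G \<subseteq> F.\<close>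
lemma double_residual_below:
  assumes F: "upset F"
  shows "cut_below (residual (residual G F \<inter> F) F) G"
  unfolding cut_below_def
proof (intro ballI allI impI, rule ccontr)
  fix y q assume y: "y \<in> G" and q: "q \<notin> residual (residual G F \<inter> F) F" and n: "\<not> q \<preceq> y"
  obtain w where w: "w \<in> residual G F" "w \<in> F" "q \<otimes> w \<notin> F" using q unfolding residual_def by blast
  have "w \<otimes> y \<in> F" using w y unfolding residual_def by blast
  moreover have "w \<otimes> y \<preceq> w \<otimes> q" using otimes_mono2 n le_total by blast
  ultimately show False using w upsetD[OF F] by (simp add: otimes_comm)
qed

lemma double_residual_above:
  assumes F: "F \<in> PS" and G: "cut G" and GF: "G \<subseteq> F"
  shows "cut_below G (residual (residual G F \<inter> F) F)"
  unfolding cut_below_def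
proof (intro ballI allI impI, rule ccontr)
  fix s q assume s: "s \<in> residual (residual G F \<inter> F) F" and q: "q \<notin> G" and n: "\<not> q \<preceq> s"
  define e where "e = q \<rightarrow> s"
  have "e \<notin> P" using n unfolding e_def le_def .
  then obtain x where x: "x \<in> F" "e \<otimes> x \<notin> F" using PSpec_escape F by blast
  have upF: "upset F" using PSpec_upset F .
  have "q \<rightarrow> x \<in> residual G F" using imp_mem_residual[OF G upF GF q x(1)] .
  moreover have "q \<rightarrow> x \<in> F" using upsetD[OF upF x(1) le_imp_weaken] .
  ultimately have sx: "s \<otimes> (q \<rightarrow> x) \<in> F" using s unfolding residual_def by blast
  have "s \<preceq> q \<otimes> e" using le_meet_right n le_total e_def by blast
  hence "s \<otimes> (q \<rightarrow> x) \<preceq> q \<otimes> e \<otimes> (q \<rightarrow> x)" by (rule otimes_mono)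
  also have "\<dots> = e \<otimes> (q \<otimes> (q \<rightarrow> x))" by (simp add: otimes_ac)
  also have "\<dots> \<preceq> e \<otimes> x" using otimes_mono2 meet_le_right by blast
  finally show False using sx x upsetD[OF upF] by blast
qed

lemma sq_imp_commutativity:
  assumes F: "F \<in> PS" and G: "G \<in> PS" and FG: "cut_below F G"
  shows "(sqimp (sqimp G F) F, G) \<in> equivP"
proof (cases "G \<subseteq> F")
  case True
  have W: "sqimp G F = residual G F" using sq_imp_of_subset G F True by blast
  have WPS: "residual G F \<in> PS" using residual_PSpec G F True by blast
  have S: "sqimp (residual G F) F = residual (residual G F \<inter> F) F"
    using sq_imp_eq PSpec_upset WPS F by blast
  have "residual (residual G F \<inter> F) F \<in> PS" using sq_imp_PSpec[OF WPS F] unfolding S .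
  thus ?thesis unfolding W S pspec_equiv_iff using G double_residual_below PSpec_upset[OF F]
      double_residual_above[OF F PSpec_cut[OF G] True] by blast
next
  case False
  hence "F \<subseteq> G" using upsets_comparable PSpec_upset F G by blast
  hence FG_eq: "(F, G) \<in> equivP" using pspec_equiv_iff F G FG cut_below_of_subset PSpec_cut by blast
  have "(G, G) \<in> equivP" using pspec_equiv_iff G cut_below_refl PSpec_cut by blast
  hence "(sqimp G F, sqimp G G) \<in> equivP" using sq_imp_respects FG_eq by blast
  moreover have "sqimp G G = P" using sq_imp_of_supset G by blast
  ultimately have "(sqimp (sqimp G F) F, sqimp P G) \<in> equivP" using sq_imp_respects FG_eq by simp
  thus ?thesis using P_sq_imp G by simp
qed

lemma sq_imp_contraposition:
  assumes F: "F \<in> PS" and G: "G \<in> PS"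
  shows "cut_below (sqimp (fplus F) (fplus G)) (sqimp G F)"
proof (cases "cut_below G F")
  case True
  hence "sqimp G F = P" using sq_imp_eq_P_iff G F by blast
  thus ?thesis using cut_below_P by simp
next
  case False
  hence GF: "G \<subseteq> F" using upsets_comparable PSpec_upset cut_below_of_subset PSpec_cut F G by metis
  have "fplus F \<subseteq> fplus G" unfolding filt_plus_eq using GF by blast
  hence "sqimp (fplus F) (fplus G) = residual (fplus F) (fplus G)"
    using sq_imp_of_subset fplus_PSpec F G by blast
  moreover have "sqimp G F = residual G F" using sq_imp_of_subset G F GF by blast
  moreover have "cut_below (residual (fplus F) (fplus G)) (residual G F)"
    unfolding cut_below_def
  proof (intro ballI allI impI, rule ccontr)
    fix d q assume d: "d \<in> residual G F" and q: "q \<notin> residual (fplus F) (fplus G)" and n: "\<not> q \<preceq> d"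
    obtain h where h: "neg h \<notin> F" "neg (q \<otimes> h) \<in> G" using q unfolding residual_def filt_plus_eq by blast
    have "d \<otimes> neg (q \<otimes> h) \<in> F" using d h unfolding residual_def by blast
    moreover have "d \<otimes> neg (q \<otimes> h) \<preceq> q \<otimes> (q \<rightarrow> neg h)"
      using otimes_mono n le_total by (metis neg_otimes)
    ultimately show False using h upsetD[OF PSpec_upset[OF F]] meet_le_right le_trans by blast
  qed
  ultimately show ?thesis by simp
qed

end

context mv_nondiscrete
begin

abbreviation cls :: "'a set \<Rightarrow> 'a set set" where "cls F \<equiv> hatL_class oplus neg zero P F"
abbreviation carrier :: "'a set set set" where "carrier \<equiv> hatL_carrier oplus neg zero P"
abbreviation hat_imp :: "'a set set \<Rightarrow> 'a set set \<Rightarrow> 'a set set" where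
  "hat_imp \<equiv> hatL_imp oplus neg zero P"
abbreviation hat_neg :: "'a set set \<Rightarrow> 'a set set" where "hat_neg \<equiv> hatL_neg oplus neg zero P"

lemma cls_eq_iff: "F \<in> PS \<Longrightarrow> G \<in> PS \<Longrightarrow> cls F = cls G \<longleftrightarrow> (F, G) \<in> equivP"
  unfolding hatL_class_def using equiv_class_eq_iff[OF pspec_equiv_equiv] by blast

lemma cls_eqI: "(F, G) \<in> equivP \<Longrightarrow> cls F = cls G"
  unfolding hatL_class_def using equiv_class_eq[OF pspec_equiv_equiv] by blast

lemma carrier_cls: "F \<in> PS \<Longrightarrow> cls F \<in> carrier"
  unfolding hatL_carrier_def hatL_class_def by (rule quotientI)

lemma carrier_obtain: "X \<in> carrier \<Longrightarrow> \<exists>F\<in>PS. X = cls F"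
  unfolding hatL_carrier_def hatL_class_def by (auto elim: quotientE)

text \<open>Since \<sqsubseteq>\<rightarrow> and ^+ respect \<equiv>, the operations on classes may be computed on any representative.\<close>
lemma hat_imp_cls:
  assumes "F \<in> PS" "G \<in> PS"
  shows "hat_imp (cls F) (cls G) = cls (sqimp F G)"
proof -
  have "(sqimp F G, sqimp (SOME H. H \<in> cls F) (SOME H. H \<in> cls G)) \<in> equivP"
    using sq_imp_respects equiv_some_rep[OF pspec_equiv_equiv] assms
    unfolding hatL_class_def by blast
  from cls_eqI[OF this] show ?thesis unfolding hatL_imp_def by simp
qed

lemma hat_neg_cls:
  assumes "F \<in> PS"
  shows "hat_neg (cls F) = cls (fplus F)"
proof -
  have "(fplus F, fplus (SOME H. H \<in> cls F)) \<in> equivP"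
    using fplus_respects equiv_some_rep[OF pspec_equiv_equiv] assms
    unfolding hatL_class_def by blast
  from cls_eqI[OF this] show ?thesis unfolding hatL_neg_def by simp
qed

text \<open>The class of P is a singleton, so  [F] \<le> [G]  means exactly  cut_below F G.\<close>
lemma cls_eq_P_iff: "H \<in> PS \<Longrightarrow> cls H = cls P \<longleftrightarrow> H = P"
  using cls_eq_iff[OF _ P_PSpec] pspec_equiv_iff cut_below_P cut_below_P_iff by blast

lemma hat_le_cls_iff:
  "F \<in> PS \<Longrightarrow> G \<in> PS \<Longrightarrow> hat_imp (cls F) (cls G) = cls P \<longleftrightarrow> cut_below F G"
  using hat_imp_cls cls_eq_P_iff sq_imp_PSpec sq_imp_eq_P_iff by simp

text \<open>The commutativity law: both sides are the class of the larger of F and G.\<close>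
lemma hat_commutativity:
  assumes F: "F \<in> PS" and G: "G \<in> PS"
  shows "hat_imp (hat_imp (cls F) (cls G)) (cls G) = hat_imp (hat_imp (cls G) (cls F)) (cls F)"
proof -
  have to_larger: "hat_imp (hat_imp (cls A) (cls B)) (cls B) = cls B \<and>
      hat_imp (hat_imp (cls B) (cls A)) (cls A) = cls B"
    if A: "A \<in> PS" and B: "B \<in> PS" and AB: "cut_below A B" for A B
  proof
    have "sqimp A B = P" using sq_imp_eq_P_iff A B AB by blast
    thus "hat_imp (hat_imp (cls A) (cls B)) (cls B) = cls B"
      using hat_imp_cls P_sq_imp P_PSpec A B by simp
    show "hat_imp (hat_imp (cls B) (cls A)) (cls A) = cls B"
      using hat_imp_cls sq_imp_PSpec cls_eqI[OF sq_imp_commutativity[OF A B AB]] A B by simp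
  qed
  consider "cut_below F G" | "cut_below G F" using cut_below_total PSpec_cut F G by blast
  thus ?thesis using to_larger F G by cases simp_all
qed

lemma hatL_linear_wajsberg: "linear_wajsberg_algebra carrier hat_imp hat_neg (cls P)"
  unfolding linear_wajsberg_algebra_def wajsberg_algebra_def wajsberg_le_def
proof (intro conjI ballI)
  show "cls P \<in> carrier" using carrier_cls P_PSpec by blast
next
  fix X assume "X \<in> carrier"
  then obtain F where F: "F \<in> PS" "X = cls F" using carrier_obtain by blast
  show "hat_neg X \<in> carrier" using F hat_neg_cls carrier_cls fplus_PSpec by simp
  show "hat_imp (cls P) X = X" using F hat_imp_cls P_sq_imp P_PSpec by simp
next
  fix X Y assume "X \<in> carrier" "Y \<in> carrier"
  then obtain F G where F: "F \<in> PS" "X = cls F" and G: "G \<in> PS" "Y = cls G"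
    using carrier_obtain by metis
  show "hat_imp X Y \<in> carrier" using F G hat_imp_cls carrier_cls sq_imp_PSpec by simp
  show "hat_imp (hat_imp X Y) Y = hat_imp (hat_imp Y X) X" using F G hat_commutativity by simp
  show "hat_imp (hat_imp (hat_neg X) (hat_neg Y)) (hat_imp Y X) = cls P"
    using F G sq_imp_contraposition hat_neg_cls hat_imp_cls cls_eq_P_iff sq_imp_eq_P_iff
      fplus_PSpec sq_imp_PSpec by simp
  show "hat_imp X Y = cls P \<or> hat_imp Y X = cls P"
    using F G hat_le_cls_iff cut_below_total PSpec_cut by simp
next
  fix X Y Z assume "X \<in> carrier" "Y \<in> carrier" "Z \<in> carrier"
  then obtain F G K where F: "F \<in> PS" "X = cls F" and G: "G \<in> PS" "Y = cls G"
    and K: "K \<in> PS" "Z = cls K"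
    using carrier_obtain by metis
  show "hat_imp (hat_imp X Y) (hat_imp (hat_imp Y Z) (hat_imp X Z)) = cls P"
    using F G K sq_imp_transitivity hat_imp_cls cls_eq_P_iff sq_imp_eq_P_iff sq_imp_PSpec by simp
qed

end

theorem mainTheorem18:
  fixes oplus :: "'a \<Rightarrow> 'a \<Rightarrow> 'a" and neg :: "'a \<Rightarrow> 'a" and zero :: 'a and P :: "'a set"
  assumes mv: "mv_algebra oplus neg zero"
    and prime: "prime_impl_filter oplus neg zero P"
    and proper: "P \<noteq> UNIV"
    and nondiscrete: "quot_non_discrete oplus neg zero P"
  shows "equiv (PSpec oplus neg zero P) (pspec_equiv oplus neg zero P)
    \<and> (\<forall>F \<in> PSpec oplus neg zero P. filt_plus oplus neg zero F \<in> PSpec oplus neg zero P)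
    \<and> (\<forall>F \<in> PSpec oplus neg zero P. \<forall>G \<in> PSpec oplus neg zero P.
          sq_imp oplus neg F G \<in> PSpec oplus neg zero P)
    \<and> (\<forall>F F'. (F, F') \<in> pspec_equiv oplus neg zero P \<longrightarrow>
          (filt_plus oplus neg zero F, filt_plus oplus neg zero F') \<in> pspec_equiv oplus neg zero P)
    \<and> (\<forall>F F' G G'. (F, F') \<in> pspec_equiv oplus neg zero P \<longrightarrow> (G, G') \<in> pspec_equiv oplus neg zero P \<longrightarrow>
          (sq_imp oplus neg F G, sq_imp oplus neg F' G') \<in> pspec_equiv oplus neg zero P)
    \<and> linear_wajsberg_algebra (hatL_carrier oplus neg zero P)
          (hatL_imp oplus neg zero P) (hatL_neg oplus neg zero P) (hatL_class oplus neg zero P P)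
    \<and> (\<forall>F \<in> PSpec oplus neg zero P. \<forall>G \<in> PSpec oplus neg zero P.
          wajsberg_le (hatL_imp oplus neg zero P) (hatL_class oplus neg zero P P)
             (hatL_class oplus neg zero P F) (hatL_class oplus neg zero P G)
          \<longleftrightarrow> sq_imp oplus neg F G = P)"
proof -
  interpret mv_nondiscrete oplus neg zero P
    by unfold_locales (fact mv prime proper nondiscrete)+
  have order: "\<forall>F\<in>PS. \<forall>G\<in>PS. wajsberg_le hat_imp (cls P) (cls F) (cls G) \<longleftrightarrow> sqimp F G = P"
    unfolding wajsberg_le_def using hat_le_cls_iff sq_imp_eq_P_iff by simp
  show ?thesis
    using pspec_equiv_equiv fplus_PSpec sq_imp_PSpec fplus_respects sq_imp_respects
      hatL_linear_wajsberg order by blast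
qed

end
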